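(* Let $X,Y$ be complex Banach spaces, $U:X\to Y$ a bounded linear operator with $\|U\|\le\lambda$, $\lambda\ge1$, $1\le p<\infty$, and $Z=(\mathbb C^n,\|\cdot\|)$ a Banach space whose canonical basis is normalized $1$-unconditional. Then $$A_\lambda(B_Z,p,U)\ge\frac{\|Id:Z\to\ell_1^n\|}{n}K_\lambda(B_Z,p,U).$$
   Context: For a complete Reinhardt domain $\Omega\subset\mathbb C^n$ and a bounded holomorphic $f:\Omega\to X$, $f(z)=\sum_\alpha a_\alpha z^\alpha$, $\|f\|_{\Omega,X}=\sup_\Omega\|f(z)\|_X$. $K_\lambda(\Omega,p,U)$ is the supremum of all $r\ge0$ such that $\sup_{z\in r\Omega}\sum_\alpha\|U(a_\alpha)z^\alpha\|_Y^p\le\lambda^p\|f\|_{\Omega,X}^p$ for all bounded holomorphic $f:\Omega\to X$. $A_\lambda(\Omega,p,U)$ is the supremum of $\frac1n\sum_{i=1}^nr_i$ over $r\in\mathbb R^n_{\ge0}$ such that $\sum_\alpha\|U(a_\alpha)\|_Y^pr^{p\alpha}\le\lambda^p\|f\|_{\Omega,X}^p$ for all bounded holomorphic $f:\Omega\to X$. $B_Z$ is the open unit ball of $Z$. *)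

theory Defs
  imports "HOL-Analysis.Analysis"
begin

text \<open>HOL-Analysis only has real normed spaces.  A complex Banach space is a real
Banach space with a compatible complex scalar multiplication.\<close>

class complex_banach = banach +
  fixes scaleC :: "complex \<Rightarrow> 'a \<Rightarrow> 'a"  (infixr \<open>*\<^sub>C\<close> 75)
  assumes scaleC_of_real: "scaleC (complex_of_real r) x = r *\<^sub>R x"
    and scaleC_add_right: "scaleC c (x + y) = scaleC c x + scaleC c y"
    and scaleC_add_left: "scaleC (c + d) x = scaleC c x + scaleC d x"
    and scaleC_scaleC: "scaleC c (scaleC d x) = scaleC (c * d) x"
    and norm_scaleC: "norm (scaleC c x) = cmod c * norm x"

definition complex_bounded_linear :: "('a::complex_banach \<Rightarrow> 'b::complex_banach) \<Rightarrow> bool" where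
  "complex_bounded_linear U \<longleftrightarrow> bounded_linear U \<and> (\<forall>c x. U (c *\<^sub>C x) = c *\<^sub>C U x)"

definition is_norm_on_Cn :: "(complex ^ 'n \<Rightarrow> real) \<Rightarrow> bool" where
  "is_norm_on_Cn N \<longleftrightarrow>
     (\<forall>x. N x = 0 \<longleftrightarrow> x = 0) \<and>
     (\<forall>c x. N (c *s x) = cmod c * N x) \<and>
     (\<forall>x y. N (x + y) \<le> N x + N y)"

definition normalized_1_unconditional :: "(complex ^ 'n \<Rightarrow> real) \<Rightarrow> bool" where
  "normalized_1_unconditional N \<longleftrightarrow>
     (\<forall>i. N (axis i 1) = 1) \<and>
     (\<forall>\<theta> z. (\<forall>i. cmod (\<theta> $ i) = 1) \<longrightarrow> N (\<chi> i. \<theta> $ i * z $ i) \<le> N z)"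

definition open_unit_ball :: "(complex ^ 'n \<Rightarrow> real) \<Rightarrow> (complex ^ 'n) set" where
  "open_unit_ball N = {z. N z < 1}"

definition id_to_l1_norm :: "(complex ^ 'n \<Rightarrow> real) \<Rightarrow> real" where
  "id_to_l1_norm N = Sup ((\<lambda>z. \<Sum>i\<in>UNIV. cmod (z $ i)) ` {z. N z \<le> 1})"

definition monom :: "complex ^ 'n \<Rightarrow> ('n \<Rightarrow> nat) \<Rightarrow> complex" where
  "monom z \<alpha> = (\<Prod>i\<in>UNIV. (z $ i) ^ \<alpha> i)"

definition holo_on :: "(complex ^ 'n \<Rightarrow> 'x::complex_banach) \<Rightarrow> (complex ^ 'n) set \<Rightarrow> bool" where
  "holo_on f \<Omega> \<longleftrightarrow>
     (\<forall>z\<in>\<Omega>. \<exists>D. (f has_derivative D) (at z) \<and> (\<forall>c v. D (c *s v) = c *\<^sub>C D v))"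

definition bounded_holo_coeffs ::
  "(complex ^ 'n \<Rightarrow> 'x::complex_banach) \<Rightarrow> (('n \<Rightarrow> nat) \<Rightarrow> 'x) \<Rightarrow> (complex ^ 'n) set \<Rightarrow> bool" where
  "bounded_holo_coeffs f a \<Omega> \<longleftrightarrow>
     holo_on f \<Omega> \<and> bounded (f ` \<Omega>) \<and>
     (\<forall>z\<in>\<Omega>. ((\<lambda>\<alpha>. monom z \<alpha> *\<^sub>C a \<alpha>) has_sum f z) UNIV)"

definition sup_norm :: "(complex ^ 'n \<Rightarrow> 'x::complex_banach) \<Rightarrow> (complex ^ 'n) set \<Rightarrow> real" where
  "sup_norm f \<Omega> = (SUP z\<in>\<Omega>. norm (f z))"

definition K_const :: "real \<Rightarrow> (complex ^ 'n) set \<Rightarrow> real \<Rightarrow> ('x::complex_banach \<Rightarrow> 'y::complex_banach) \<Rightarrow> ereal" where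
  "K_const lam \<Omega> p U = Sup (ereal ` {r. r \<ge> 0 \<and>
     (\<forall>(f :: complex ^ 'n \<Rightarrow> 'x) a. bounded_holo_coeffs f a \<Omega> \<longrightarrow>
        (\<forall>z\<in>(\<lambda>w. r *\<^sub>R w) ` \<Omega>.
           (\<lambda>\<alpha>. norm (monom z \<alpha> *\<^sub>C U (a \<alpha>)) powr p) summable_on UNIV \<and>
           (\<Sum>\<^sub>\<infinity>\<alpha>. norm (monom z \<alpha> *\<^sub>C U (a \<alpha>)) powr p) \<le> lam powr p * sup_norm f \<Omega> powr p))})"

definition A_const :: "real \<Rightarrow> (complex ^ 'n) set \<Rightarrow> real \<Rightarrow> ('x::complex_banach \<Rightarrow> 'y::complex_banach) \<Rightarrow> ereal" where
  "A_const lam \<Omega> p U = Sup (ereal ` {(\<Sum>i\<in>UNIV. r i) / real CARD('n) | r :: 'n \<Rightarrow> real. (\<forall>i. r i \<ge> 0) \<and>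
     (\<forall>(f :: complex ^ 'n \<Rightarrow> 'x) a. bounded_holo_coeffs f a \<Omega> \<longrightarrow>
        (\<lambda>\<alpha>. norm (U (a \<alpha>)) powr p * (\<Prod>i\<in>UNIV. r i ^ \<alpha> i) powr p) summable_on UNIV \<and>
        (\<Sum>\<^sub>\<infinity>\<alpha>. norm (U (a \<alpha>)) powr p * (\<Prod>i\<in>UNIV. r i ^ \<alpha> i) powr p) \<le> lam powr p * sup_norm f \<Omega> powr p)})"

end

theory Submission
  imports Defs
begin

text \<open>If the radius r is admissible for K and z lies in the unit ball, then the multiradius
  (r |z_1|, ..., r |z_n|) is admissible for A, because |(r z)^\<alpha>| = (r |z|)^\<alpha>: the two defining
  series coincide termwise.  Averaging these multiradii gives r \<parallel>z\<parallel>_1 / n \<le> A, and the supremum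
  over the unit ball turns \<parallel>z\<parallel>_1 into \<parallel>Id : Z \<rightarrow> \<ell>_1^n\<parallel>.\<close>

definition K_admissible ::
  "real \<Rightarrow> (complex ^ 'n) set \<Rightarrow> real \<Rightarrow> ('x::complex_banach \<Rightarrow> 'y::complex_banach) \<Rightarrow> real \<Rightarrow> bool" where
  "K_admissible lam \<Omega> p U r \<longleftrightarrow> r \<ge> 0 \<and>
     (\<forall>(f :: complex ^ 'n \<Rightarrow> 'x) a. bounded_holo_coeffs f a \<Omega> \<longrightarrow>
        (\<forall>z\<in>(\<lambda>w. r *\<^sub>R w) ` \<Omega>.
           (\<lambda>\<alpha>. norm (monom z \<alpha> *\<^sub>C U (a \<alpha>)) powr p) summable_on UNIV \<and>
           (\<Sum>\<^sub>\<infinity>\<alpha>. norm (monom z \<alpha> *\<^sub>C U (a \<alpha>)) powr p) \<le> lam powr p * sup_norm f \<Omega> powr p))"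

definition A_admissible ::
  "real \<Rightarrow> (complex ^ 'n) set \<Rightarrow> real \<Rightarrow> ('x::complex_banach \<Rightarrow> 'y::complex_banach) \<Rightarrow> ('n \<Rightarrow> real) \<Rightarrow> bool" where
  "A_admissible lam \<Omega> p U r \<longleftrightarrow> (\<forall>i. r i \<ge> 0) \<and>
     (\<forall>(f :: complex ^ 'n \<Rightarrow> 'x) a. bounded_holo_coeffs f a \<Omega> \<longrightarrow>
        (\<lambda>\<alpha>. norm (U (a \<alpha>)) powr p * (\<Prod>i\<in>UNIV. r i ^ \<alpha> i) powr p) summable_on UNIV \<and>
        (\<Sum>\<^sub>\<infinity>\<alpha>. norm (U (a \<alpha>)) powr p * (\<Prod>i\<in>UNIV. r i ^ \<alpha> i) powr p) \<le> lam powr p * sup_norm f \<Omega> powr p)"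

lemma K_const_eq_Sup_admissible:
  "K_const lam \<Omega> p U = Sup (ereal ` Collect (K_admissible lam \<Omega> p U))"
  unfolding K_const_def K_admissible_def ..

lemma A_const_ge_admissible:
  fixes U :: "'x::complex_banach \<Rightarrow> 'y::complex_banach" and r :: "'n::finite \<Rightarrow> real"
  assumes "A_admissible lam \<Omega> p U r"
  shows "ereal ((\<Sum>i\<in>UNIV. r i) / real CARD('n)) \<le> A_const lam \<Omega> p U"
  unfolding A_const_def using assms unfolding A_admissible_def
  by (intro Sup_upper imageI) blast

lemma norm_monom_scaleR:
  fixes z :: "complex ^ 'n"
  assumes "r \<ge> 0"
  shows "norm (monom (r *\<^sub>R z) \<alpha>) = (\<Prod>i\<in>UNIV. (r * cmod (z $ i)) ^ \<alpha> i)"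
  using assms
  by (simp add: monom_def prod_norm[symmetric] norm_power norm_mult power_mult_distrib)

lemma K_admissible_imp_A_admissible:
  fixes U :: "'x::complex_banach \<Rightarrow> 'y::complex_banach" and z :: "complex ^ 'n"
  assumes r: "K_admissible lam \<Omega> p U r" and z: "z \<in> \<Omega>"
  shows "A_admissible lam \<Omega> p U (\<lambda>i. r * cmod (z $ i))"
proof -
  have r0: "r \<ge> 0" using r unfolding K_admissible_def by simp
  have termwise: "norm (monom (r *\<^sub>R z) \<alpha> *\<^sub>C U (a \<alpha>)) powr p
      = norm (U (a \<alpha>)) powr p * (\<Prod>i\<in>UNIV. (r * cmod (z $ i)) ^ \<alpha> i) powr p"
    for a :: "('n \<Rightarrow> nat) \<Rightarrow> 'x" and \<alpha>
    using r0 by (simp add: norm_scaleC norm_monom_scaleR powr_mult prod_nonneg mult.commute)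
  show ?thesis unfolding A_admissible_def
  proof (intro conjI allI impI)
    show "r * cmod (z $ i) \<ge> 0" for i using r0 by simp
    fix f :: "complex ^ 'n \<Rightarrow> 'x" and a assume "bounded_holo_coeffs f a \<Omega>"
    moreover have "r *\<^sub>R z \<in> (\<lambda>w. r *\<^sub>R w) ` \<Omega>" using z by blast
    ultimately have "(\<lambda>\<alpha>. norm (monom (r *\<^sub>R z) \<alpha> *\<^sub>C U (a \<alpha>)) powr p) summable_on UNIV \<and>
        (\<Sum>\<^sub>\<infinity>\<alpha>. norm (monom (r *\<^sub>R z) \<alpha> *\<^sub>C U (a \<alpha>)) powr p) \<le> lam powr p * sup_norm f \<Omega> powr p"
      using r unfolding K_admissible_def by blast
    then show "(\<lambda>\<alpha>. norm (U (a \<alpha>)) powr p * (\<Prod>i\<in>UNIV. (r * cmod (z $ i)) ^ \<alpha> i) powr p) summable_on UNIV"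
      and "(\<Sum>\<^sub>\<infinity>\<alpha>. norm (U (a \<alpha>)) powr p * (\<Prod>i\<in>UNIV. (r * cmod (z $ i)) ^ \<alpha> i) powr p)
        \<le> lam powr p * sup_norm f \<Omega> powr p"
      unfolding termwise by simp_all
  qed
qed

lemma A_const_ge_l1_norm_mult:
  fixes U :: "'x::complex_banach \<Rightarrow> 'y::complex_banach" and z :: "complex ^ 'n"
  assumes "K_admissible lam \<Omega> p U r" and "z \<in> \<Omega>"
  shows "ereal (r / real CARD('n) * (\<Sum>i\<in>UNIV. cmod (z $ i))) \<le> A_const lam \<Omega> p U"
proof -
  have "(\<Sum>i\<in>UNIV. r * cmod (z $ i)) / real CARD('n)
      = r / real CARD('n) * (\<Sum>i\<in>UNIV. cmod (z $ i))"
    by (simp add: sum_distrib_left sum_divide_distrib)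
  moreover have "ereal ((\<Sum>i\<in>UNIV. r * cmod (z $ i)) / real CARD('n)) \<le> A_const lam \<Omega> p U"
    using assms by (intro A_const_ge_admissible K_admissible_imp_A_admissible)
  ultimately show ?thesis by metis
qed

lemma component_le_unconditional_norm:
  fixes N :: "complex ^ 'n \<Rightarrow> real"
  assumes N: "is_norm_on_Cn N" and unc: "normalized_1_unconditional N"
  shows "cmod (z $ i) \<le> N z"
proof -
  \<comment> \<open>flipping all signs but the i-th one, z + w is twice the i-th coordinate vector\<close>
  define \<theta> :: "complex ^ 'n" where "\<theta> = (\<chi> j. if j = i then 1 else -1)"
  define w where "w = (\<chi> j. \<theta> $ j * z $ j)"
  have "\<forall>j. cmod (\<theta> $ j) = 1" by (simp add: \<theta>_def)
  then have "N w \<le> N z" using unc unfolding normalized_1_unconditional_def w_def by blast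
  moreover have "z + w = (2 * z $ i) *s axis i 1"
    by (simp add: w_def \<theta>_def vec_eq_iff axis_def)
  then have "N (z + w) = 2 * cmod (z $ i)"
    using N unc unfolding is_norm_on_Cn_def normalized_1_unconditional_def by (simp add: norm_mult)
  moreover have "N (z + w) \<le> N z + N w" using N unfolding is_norm_on_Cn_def by blast
  ultimately show ?thesis by simp
qed

lemma bdd_above_l1_norms:
  fixes N :: "complex ^ 'n \<Rightarrow> real"
  assumes "is_norm_on_Cn N" and "normalized_1_unconditional N"
  shows "bdd_above ((\<lambda>z. \<Sum>i\<in>UNIV. cmod (z $ i)) ` {z. N z \<le> 1})"
proof (rule bdd_aboveI2)
  fix z assume "z \<in> {z. N z \<le> 1}"
  then have "cmod (z $ i) \<le> 1" for i
    using component_le_unconditional_norm[OF assms] by (meson mem_Collect_eq order_trans)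
  then show "(\<Sum>i\<in>UNIV. cmod (z $ i)) \<le> real CARD('n)"
    using sum_mono[of UNIV "\<lambda>i. cmod (z $ i)" "\<lambda>_. 1"] by simp
qed

lemma id_to_l1_norm_ge_1:
  fixes N :: "complex ^ 'n \<Rightarrow> real"
  assumes "is_norm_on_Cn N" and unc: "normalized_1_unconditional N"
  shows "id_to_l1_norm N \<ge> 1"
proof -
  fix i :: 'n
  have "(\<Sum>j\<in>UNIV. cmod (axis i (1::complex) $ j)) = (\<Sum>j\<in>UNIV. if j = i then 1 else 0)"
    by (intro sum.cong) (auto simp: axis_def)
  moreover have "N (axis i 1) \<le> 1" using unc unfolding normalized_1_unconditional_def by simp
  ultimately have "1 \<in> (\<lambda>z. \<Sum>i\<in>UNIV. cmod (z $ i)) ` {z. N z \<le> 1}"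
    by (intro rev_image_eqI[of "axis i 1"]) auto
  then show ?thesis
    unfolding id_to_l1_norm_def by (rule cSup_upper[OF _ bdd_above_l1_norms[OF assms]])
qed

text \<open>The supremum defining the norm of Id may be taken over the open ball, by scaling.\<close>

lemma id_to_l1_norm_le:
  fixes N :: "complex ^ 'n \<Rightarrow> real"
  assumes N: "is_norm_on_Cn N"
    and bound: "\<And>z. N z < 1 \<Longrightarrow> (\<Sum>i\<in>UNIV. cmod (z $ i)) \<le> b"
  shows "id_to_l1_norm N \<le> b"
  unfolding id_to_l1_norm_def
proof (rule cSup_least)
  have "N 0 = 0" using N unfolding is_norm_on_Cn_def by simp
  then have "0 \<in> {z. N z \<le> 1}" by simp
  then show "(\<lambda>z. \<Sum>i\<in>UNIV. cmod (z $ i)) ` {z. N z \<le> 1} \<noteq> {}" by blast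
next
  fix x assume "x \<in> (\<lambda>z. \<Sum>i\<in>UNIV. cmod (z $ i)) ` {z. N z \<le> 1}"
  then obtain z where z: "N z \<le> 1" and x: "x = (\<Sum>i\<in>UNIV. cmod (z $ i))" by blast
  show "x \<le> b" unfolding x
  proof (rule field_le_mult_one_interval)
    fix t :: real assume t: "0 < t" "t < 1"
    have "N (complex_of_real t *s z) = t * N z" using N t unfolding is_norm_on_Cn_def by simp
    also have "\<dots> < 1" using t z mult_left_mono[of "N z" 1 t] by linarith
    finally have "(\<Sum>i\<in>UNIV. cmod ((complex_of_real t *s z) $ i)) \<le> b" by (rule bound)
    then show "t * (\<Sum>i\<in>UNIV. cmod (z $ i)) \<le> b"
      using t by (simp add: norm_mult sum_distrib_left)
  qed
qed

lemma ereal_mult_id_to_l1_norm_le: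
  fixes N :: "complex ^ 'n \<Rightarrow> real"
  assumes N: "is_norm_on_Cn N" and t: "t \<ge> 0"
    and bound: "\<And>z. N z < 1 \<Longrightarrow> ereal (t * (\<Sum>i\<in>UNIV. cmod (z $ i))) \<le> B"
  shows "ereal (t * id_to_l1_norm N) \<le> B"
proof -
  have "N 0 = 0" using N unfolding is_norm_on_Cn_def by simp
  then have B0: "0 \<le> B" using bound[of 0] by (simp add: zero_ereal_def)
  show ?thesis
  proof (cases B)
    case (real b)
    show ?thesis
    proof (cases "t = 0")
      case False
      have "id_to_l1_norm N \<le> b / t"
        using N bound t False real by (intro id_to_l1_norm_le) (simp_all add: field_simps)
      then show ?thesis using t False real by (simp add: field_simps)
    qed (use B0 in \<open>simp add: zero_ereal_def\<close>)
  qed (use B0 in simp_all)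
qed

lemma A_const_ge_id_to_l1_norm_mult:
  fixes U :: "'x::complex_banach \<Rightarrow> 'y::complex_banach" and N :: "complex ^ 'n \<Rightarrow> real"
  assumes N: "is_norm_on_Cn N" and r: "K_admissible lam (open_unit_ball N) p U r"
  shows "ereal (r / real CARD('n) * id_to_l1_norm N) \<le> A_const lam (open_unit_ball N) p U"
proof (rule ereal_mult_id_to_l1_norm_le[OF N])
  show "r / real CARD('n) \<ge> 0" using r unfolding K_admissible_def by simp
  show "ereal (r / real CARD('n) * (\<Sum>i\<in>UNIV. cmod (z $ i))) \<le> A_const lam (open_unit_ball N) p U"
    if "N z < 1" for z
    using that by (intro A_const_ge_l1_norm_mult[OF r]) (simp add: open_unit_ball_def)
qed

lemma ereal_mult_Sup_le:
  fixes c :: real and R :: "real set"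
  assumes "c > 0" and "\<And>r. r \<in> R \<Longrightarrow> ereal (c * r) \<le> B"
  shows "ereal c * Sup (ereal ` R) \<le> B"
  using assms by (cases "R = {}") (simp_all add: bot_ereal_def Sup_ereal_mult_left' SUP_least)

theorem mainTheorem17:
  fixes U :: "'x::complex_banach \<Rightarrow> 'y::complex_banach"
    and N :: "complex ^ 'n \<Rightarrow> real"
    and lam p :: real
  assumes "complex_bounded_linear U"
    and "onorm U \<le> lam"
    and "lam \<ge> 1"
    and "1 \<le> p"
    and N: "is_norm_on_Cn N"
    and unc: "normalized_1_unconditional N"
  shows "A_const lam (open_unit_ball N) p U
           \<ge> ereal (id_to_l1_norm N / real CARD('n)) * K_const lam (open_unit_ball N) p U"
proof -
  have "ereal (id_to_l1_norm N / real CARD('n) * r) \<le> A_const lam (open_unit_ball N) p U"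
    if "K_admissible lam (open_unit_ball N) p U r" for r
    using A_const_ge_id_to_l1_norm_mult[OF N that] by (simp add: mult.commute)
  moreover have "id_to_l1_norm N / real CARD('n) > 0" using id_to_l1_norm_ge_1[OF N unc] by simp
  ultimately show ?thesis
    unfolding K_const_eq_Sup_admissible by (intro ereal_mult_Sup_le) auto
qed

end
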